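(* Let $r_{n,m}$ be the number of horizontally decorated paths ending at $(n,m)$. Then \[ r_{n,m}=r_{n,m-1}+(m+1)\,r_{n-1,m}\quad (n,m\ge1,\ n\ge m),\qquad r_{n,m}=0\quad(n<m),\qquad r_{n,0}=1\quad(n\ge0). \] Moreover, the number of relaxed binary trees of size $n$ equals $r_{n,n}$.
   Context: A horizontally decorated path is a lattice path starting at $(0,0)$ with steps $H=(1,0)$ and $V=(0,1)$ confined to the region $0\le y\le x$, in which each $H$ step is decorated by a number in $\{1,\dots,k+1\}$, where $k$ is the $y$-coordinate of that step. A (rooted, plane) binary tree is either a leaf or an internal node with an ordered pair of binary subtrees; its size is its number of internal nodes; postorder visits left subtree, right subtree, then root. A relaxed binary tree of size $n$ is obtained from a binary tree $T$ with $n$ internal nodes (its spine) by keeping the left-most leaf and turning every other leaf $\ell$ into a pointer to a vertex of $T$ which is an internal node or the left-most leaf and which precedes $\ell$ in postorder; two relaxed trees are equal iff they have the same spine and the same pointer targets. *)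

theory Defs
  imports Main
begin

datatype step = H nat | V

fun dp_ok :: "nat \<times> nat \<Rightarrow> step list \<Rightarrow> bool" where
  "dp_ok p [] = True"
| "dp_ok (x, y) (H d # s) = (1 \<le> d \<and> d \<le> y + 1 \<and> y \<le> x + 1 \<and> dp_ok (x + 1, y) s)"
| "dp_ok (x, y) (V # s) = (y + 1 \<le> x \<and> dp_ok (x, y + 1) s)"

fun dp_end :: "nat \<times> nat \<Rightarrow> step list \<Rightarrow> nat \<times> nat" where
  "dp_end p [] = p"
| "dp_end (x, y) (H d # s) = dp_end (x + 1, y) s"
| "dp_end (x, y) (V # s) = dp_end (x, y + 1) s"

definition hd_paths :: "nat \<Rightarrow> nat \<Rightarrow> step list set" where
  "hd_paths n m = {s. dp_ok (0, 0) s \<and> dp_end (0, 0) s = (n, m)}"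

definition r :: "nat \<Rightarrow> nat \<Rightarrow> nat" where
  "r n m = card (hd_paths n m)"

datatype btree = Leaf | Node btree btree

fun bsize :: "btree \<Rightarrow> nat" where
  "bsize Leaf = 0"
| "bsize (Node t1 t2) = Suc (bsize t1 + bsize t2)"

text \<open>Vertices are addressed by their position (path from the root; False = left, True = right).
  Postorder list of all vertices (leaves and internal nodes).\<close>
fun postord :: "btree \<Rightarrow> bool list list" where
  "postord Leaf = [[]]"
| "postord (Node t1 t2) = map (Cons False) (postord t1) @ map (Cons True) (postord t2) @ [[]]"

fun leaves :: "btree \<Rightarrow> bool list list" where
  "leaves Leaf = [[]]"
| "leaves (Node t1 t2) = map (Cons False) (leaves t1) @ map (Cons True) (leaves t2)"

fun internals :: "btree \<Rightarrow> bool list list" where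
  "internals Leaf = []"
| "internals (Node t1 t2) = map (Cons False) (internals t1) @ map (Cons True) (internals t2) @ [[]]"

definition leftmost_leaf :: "btree \<Rightarrow> bool list" where
  "leftmost_leaf T = hd (leaves T)"

definition precedes :: "btree \<Rightarrow> bool list \<Rightarrow> bool list \<Rightarrow> bool" where
  "precedes T v w = (\<exists>i j. i < j \<and> j < length (postord T) \<and> postord T ! i = v \<and> postord T ! j = w)"

text \<open>A relaxed binary tree is a spine T together with a pointer map f, defined exactly on
  the non-leftmost leaves, each pointing to an internal node or the leftmost leaf that
  precedes it in postorder.\<close>
definition relaxed_trees :: "nat \<Rightarrow> (btree \<times> (bool list \<Rightarrow> bool list option)) set" where
  "relaxed_trees n = {(T, f). bsize T = n
      \<and> dom f = set (leaves T) - {leftmost_leaf T}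
      \<and> (\<forall>l \<in> dom f. the (f l) \<in> set (internals T) \<union> {leftmost_leaf T}
                     \<and> precedes T (the (f l)) l)}"

end

theory Submission
  imports Defs "HOL-Library.FuncSet"
begin

text \<open>
  Classifying a decorated path by its last step gives the recurrence for \<open>r\<close>: it comes
  either from \<open>(n, m - 1)\<close> by a V step or from \<open>(n - 1, m)\<close> by one of \<open>m + 1\<close>
  decorated H steps.

  For a fixed spine \<open>T\<close>, a leaf other than the leftmost one may point to the leftmost leaf
  or to any internal node preceding it in postorder, so \<open>T\<close> carries
  \<open>\<Prod>\<^sub>l (1 + #internal nodes before l)\<close> pointer maps. Recording the number \<open>k\<close> of targets
  available to the left of a subtree makes this weight multiplicative along the root
  decomposition (\<open>tree_weight\<close>). Summing the product of these weights over sequences of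
  \<open>h\<close> spines of total size \<open>m\<close>, each spine shifting \<open>k\<close> by its size, gives
  \<open>F\<^sub>h(k, m) = forest_weight h k m\<close>, which satisfies
  \<open>F\<^sub>h(k, m) = F\<^bsub>h+1\<^esub>(k, m - 1) + (k + m) F\<^bsub>h-1\<^esub>(k, m)\<close>: by induction on \<open>h\<close>, peeling off
  the first spine leaves the factor \<open>k + m\<close> unchanged, as \<open>k\<close> grows and \<open>m\<close> shrinks by the
  size of that spine. For \<open>k = 1\<close> this is the recurrence of \<open>r\<close>, whence
  \<open>r (m + d) m = F\<^bsub>d+1\<^esub>(1, m)\<close>, and on the diagonal \<open>F\<^sub>1(1, n)\<close> is the total weight of the
  spines of size \<open>n\<close>, i.e. the number of relaxed trees of size \<open>n\<close>.
\<close>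

fun list_precedes :: "'a list \<Rightarrow> 'a \<Rightarrow> 'a \<Rightarrow> bool" where
  "list_precedes [] v u = False"
| "list_precedes (x # xs) v u = ((x = v \<and> u \<in> set xs) \<or> list_precedes xs v u)"

lemma list_precedes_iff_nth:
  "list_precedes xs v u \<longleftrightarrow> (\<exists>i j. i < j \<and> j < length xs \<and> xs ! i = v \<and> xs ! j = u)"
proof (induction xs)
  case (Cons x xs)
  show ?case
  proof
    assume "list_precedes (x # xs) v u"
    then consider "x = v" "u \<in> set xs" | "list_precedes xs v u" by auto
    then show "\<exists>i j. i < j \<and> j < length (x # xs) \<and> (x # xs) ! i = v \<and> (x # xs) ! j = u"
    proof cases
      case 1
      then obtain j where "j < length xs" "xs ! j = u" by (auto simp: in_set_conv_nth)
      then show ?thesis using 1 by (intro exI[of _ 0] exI[of _ "Suc j"]) auto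
    next
      case 2
      then obtain i j where "i < j" "j < length xs" "xs ! i = v" "xs ! j = u" using Cons.IH by blast
      then show ?thesis by (intro exI[of _ "Suc i"] exI[of _ "Suc j"]) auto
    qed
  next
    assume "\<exists>i j. i < j \<and> j < length (x # xs) \<and> (x # xs) ! i = v \<and> (x # xs) ! j = u"
    then obtain i j where ij: "i < j" "j < length (x # xs)" "(x # xs) ! i = v" "(x # xs) ! j = u"
      by blast
    then obtain j' where j: "j = Suc j'" by (cases j) auto
    show "list_precedes (x # xs) v u"
    proof (cases i)
      case 0
      then show ?thesis using ij j by auto
    next
      case (Suc i')
      then show ?thesis using Cons.IH ij j by auto
    qed
  qed
qed simp

lemma list_precedes_append:
  "list_precedes (xs @ ys) v u \<longleftrightarrow>
     list_precedes xs v u \<or> list_precedes ys v u \<or> (v \<in> set xs \<and> u \<in> set ys)"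
  by (induction xs) auto

lemma list_precedes_map_Cons:
  "list_precedes (map (Cons b) xs) v u \<longleftrightarrow>
     (\<exists>v' u'. v = b # v' \<and> u = b # u' \<and> list_precedes xs v' u')"
  by (induction xs) auto

lemma bij_betw_PiE_maps_with_dom:
  "bij_betw (\<lambda>g l. if l \<in> D then Some (g l) else None) (PiE D S)
     {f. dom f = D \<and> (\<forall>l\<in>dom f. the (f l) \<in> S l)}"
proof (rule bij_betwI')
  fix g1 g2 assume "g1 \<in> PiE D S" "g2 \<in> PiE D S"
  then show "((\<lambda>l. if l \<in> D then Some (g1 l) else None)
              = (\<lambda>l. if l \<in> D then Some (g2 l) else None)) \<longleftrightarrow> g1 = g2"
    by (force simp: fun_eq_iff PiE_iff extensional_def)
next
  fix g assume "g \<in> PiE D S"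
  then show "(\<lambda>l. if l \<in> D then Some (g l) else None)
      \<in> {f. dom f = D \<and> (\<forall>l\<in>dom f. the (f l) \<in> S l)}"
    by (auto simp: PiE_iff split: if_splits)
next
  fix f assume "f \<in> {f. dom f = D \<and> (\<forall>l\<in>dom f. the (f l) \<in> S l)}"
  then show "\<exists>g\<in>PiE D S. f = (\<lambda>l. if l \<in> D then Some (g l) else None)"
    by (intro bexI[of _ "restrict (\<lambda>l. the (f l)) D"]) (auto simp: fun_eq_iff domIff)
qed

lemma card_maps_with_dom:
  "finite D \<Longrightarrow>
     card {f. dom f = D \<and> (\<forall>l\<in>dom f. the (f l) \<in> S l)} = (\<Prod>l\<in>D. card (S l))"
  using bij_betw_same_card[OF bij_betw_PiE_maps_with_dom[of D S]] by (simp add: card_PiE)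

lemma finite_maps_with_dom:
  "finite D \<Longrightarrow> (\<And>l. l \<in> D \<Longrightarrow> finite (S l)) \<Longrightarrow>
     finite {f. dom f = D \<and> (\<forall>l\<in>dom f. the (f l) \<in> S l)}"
  using bij_betw_finite[OF bij_betw_PiE_maps_with_dom[of D S]] by (simp add: finite_PiE)

section \<open>Decorated paths\<close>

fun step_target :: "nat \<times> nat \<Rightarrow> step \<Rightarrow> nat \<times> nat" where
  "step_target (x, y) (H d) = (x + 1, y)"
| "step_target (x, y) V = (x, y + 1)"

fun step_ok :: "nat \<times> nat \<Rightarrow> step \<Rightarrow> bool" where
  "step_ok (x, y) (H d) = (1 \<le> d \<and> d \<le> y + 1 \<and> y \<le> x + 1)"
| "step_ok (x, y) V = (y + 1 \<le> x)"

lemma dp_end_snoc: "dp_end p (s @ [z]) = step_target (dp_end p s) z"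
  by (induction p s rule: dp_end.induct) (cases z; auto)+

lemma dp_ok_snoc: "dp_ok p (s @ [z]) \<longleftrightarrow> dp_ok p s \<and> step_ok (dp_end p s) z"
  by (induction p s rule: dp_ok.induct) (cases z; auto)+

lemma dp_end_coordinate_sum:
  "dp_end p s = (a, b) \<Longrightarrow> a + b = fst p + snd p + length s"
  by (induction p s arbitrary: a b rule: dp_end.induct) auto

lemma hd_paths_0_0: "hd_paths 0 0 = {[]}"
  using dp_end_coordinate_sum[of "(0, 0)"] by (fastforce simp: hd_paths_def)

lemma hd_paths_last_step:
  assumes "(n, m) \<noteq> (0, 0)"
  shows "hd_paths n m =
      (if 1 \<le> m \<and> m \<le> n then (\<lambda>s. s @ [V]) ` hd_paths n (m - 1) else {})
    \<union> (if 1 \<le> n \<and> m \<le> n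
       then (\<lambda>(s, d). s @ [H d]) ` (hd_paths (n - 1) m \<times> {1..m + 1}) else {})"
    (is "_ = ?V \<union> ?H")
proof
  show "hd_paths n m \<subseteq> ?V \<union> ?H"
  proof
    fix s assume "s \<in> hd_paths n m"
    then have ok: "dp_ok (0, 0) s" and end_nm: "dp_end (0, 0) s = (n, m)"
      by (auto simp: hd_paths_def)
    then obtain s' z where s: "s = s' @ [z]"
      using assms by (metis dp_end.simps(1) rev_exhaust)
    obtain a b where ab: "dp_end (0, 0) s' = (a, b)" by fastforce
    have "dp_ok (0, 0) s'" "step_ok (a, b) z" "step_target (a, b) z = (n, m)"
      using ok end_nm ab by (simp_all add: s dp_ok_snoc dp_end_snoc)
    then show "s \<in> ?V \<union> ?H"
      using ab by (cases z) (force simp: s hd_paths_def)+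
  qed
  show "?V \<union> ?H \<subseteq> hd_paths n m"
    by (auto simp: hd_paths_def dp_ok_snoc dp_end_snoc split: if_splits)
qed

lemma finite_hd_paths: "finite (hd_paths n m)"
proof (induction "n + m" arbitrary: n m rule: less_induct)
  case less
  show ?case
  proof (cases "(n, m) = (0, 0)")
    case False
    then show ?thesis
      using less by (subst hd_paths_last_step) auto
  qed (auto simp: hd_paths_0_0)
qed

lemma r_last_step:
  assumes "(n, m) \<noteq> (0, 0)"
  shows "r n m = (if 1 \<le> m \<and> m \<le> n then r n (m - 1) else 0)
               + (if 1 \<le> n \<and> m \<le> n then (m + 1) * r (n - 1) m else 0)"
proof -
  have inj_V: "inj_on (\<lambda>s. s @ [V]) X" for X by (auto simp: inj_on_def)
  have inj_H: "inj_on (\<lambda>(s, d). s @ [H d]) X" for X by (auto simp: inj_on_def)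
  show ?thesis
    unfolding r_def hd_paths_last_step[OF assms]
    by (subst card_Un_disjoint)
       (auto simp: finite_hd_paths card_image inj_V inj_H card_cartesian_product)
qed

lemma r_above_diagonal: "n < m \<Longrightarrow> r n m = 0"
  using r_last_step[of n m] by simp

lemma r_0: "r n 0 = 1"
proof (induction n)
  case (Suc n)
  then show ?case using r_last_step[of "Suc n" 0] by simp
qed (simp add: r_def hd_paths_0_0)

lemma r_recurrence:
  "1 \<le> n \<Longrightarrow> 1 \<le> m \<Longrightarrow> m \<le> n \<Longrightarrow> r n m = r n (m - 1) + (m + 1) * r (n - 1) m"
  using r_last_step[of n m] by simp

section \<open>Weighted spines and forests\<close>

fun tree_weight :: "nat \<Rightarrow> btree \<Rightarrow> nat" where
  "tree_weight k Leaf = k"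
| "tree_weight k (Node t1 t2) = tree_weight k t1 * tree_weight (k + bsize t1) t2"

definition spines :: "nat \<Rightarrow> btree set" where
  "spines n = {T. bsize T = n}"

lemma spines_0: "spines 0 = {Leaf}"
  by (auto simp: spines_def elim: bsize.elims)

lemma spines_Suc:
  "spines (Suc n) = (\<Union>i\<le>n. (\<lambda>(t1, t2). Node t1 t2) ` (spines i \<times> spines (n - i)))"
proof
  show "spines (Suc n) \<subseteq> (\<Union>i\<le>n. (\<lambda>(t1, t2). Node t1 t2) ` (spines i \<times> spines (n - i)))"
  proof
    fix T assume "T \<in> spines (Suc n)"
    then obtain t1 t2 where "T = Node t1 t2" "bsize t1 + bsize t2 = n"
      by (cases T) (auto simp: spines_def)
    then show "T \<in> (\<Union>i\<le>n. (\<lambda>(t1, t2). Node t1 t2) ` (spines i \<times> spines (n - i)))"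
      by (auto simp: spines_def intro!: UN_I[of "bsize t1"] image_eqI[of _ _ "(t1, t2)"])
  qed
qed (auto simp: spines_def)

lemma finite_spines: "finite (spines n)"
proof (induction n rule: less_induct)
  case (less n)
  then show ?case by (cases n) (auto simp: spines_0 spines_Suc)
qed

definition spine_weight :: "nat \<Rightarrow> nat \<Rightarrow> nat" where
  "spine_weight k n = (\<Sum>T\<in>spines n. tree_weight k T)"

lemma spine_weight_0: "spine_weight k 0 = k"
  by (simp add: spine_weight_def spines_0)

lemma spine_weight_Suc:
  "spine_weight k (Suc n) = (\<Sum>i\<le>n. spine_weight k i * spine_weight (k + i) (n - i))"
proof -
  have "spine_weight k (Suc n)
      = (\<Sum>i\<le>n. \<Sum>T\<in>(\<lambda>(t1, t2). Node t1 t2) ` (spines i \<times> spines (n - i)). tree_weight k T)"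
    unfolding spine_weight_def spines_Suc
    by (rule sum.UNION_disjoint) (auto simp: finite_spines, auto simp: spines_def)
  also have "\<dots> = (\<Sum>i\<le>n. \<Sum>(t1, t2)\<in>spines i \<times> spines (n - i).
                        tree_weight k t1 * tree_weight (k + i) t2)"
    by (subst sum.reindex) (auto simp: inj_on_def spines_def intro!: sum.cong)
  also have "\<dots> = (\<Sum>i\<le>n. spine_weight k i * spine_weight (k + i) (n - i))"
    by (simp add: spine_weight_def sum_product sum.cartesian_product)
  finally show ?thesis .
qed

fun forest_weight :: "nat \<Rightarrow> nat \<Rightarrow> nat \<Rightarrow> nat" where
  "forest_weight 0 k m = (if m = 0 then 1 else 0)"
| "forest_weight (Suc h) k m = (\<Sum>i\<le>m. spine_weight k i * forest_weight h (k + i) (m - i))"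

declare forest_weight.simps(2) [simp del]

lemma forest_weight_empty: "forest_weight h k 0 = k ^ h"
  by (induction h arbitrary: k) (simp_all add: spine_weight_0 forest_weight.simps(2))

lemma forest_weight_1: "forest_weight 1 k m = spine_weight k m"
proof -
  have "forest_weight (Suc 0) k m = (\<Sum>i\<le>m. if i = m then spine_weight k i else 0)"
    unfolding forest_weight.simps by (rule sum.cong) auto
  then show ?thesis by simp
qed

lemma forest_weight_2: "forest_weight 2 k m = spine_weight k (Suc m)"
  unfolding numeral_2_eq_2
  by (subst forest_weight.simps(2))
     (simp add: forest_weight_1[unfolded One_nat_def] spine_weight_Suc)

lemma forest_weight_recurrence:
  "forest_weight (Suc h) k (Suc m)
     = forest_weight (Suc (Suc h)) k m + (k + Suc m) * forest_weight h k (Suc m)"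
proof (induction h arbitrary: k m)
  case 0
  then show ?case
    by (simp add: forest_weight_1[unfolded One_nat_def] forest_weight_2[unfolded numeral_2_eq_2])
next
  case (Suc h)
  have split_last: "forest_weight (Suc g) k (Suc m)
      = (\<Sum>i\<le>m. spine_weight k i * forest_weight g (k + i) (Suc (m - i)))
        + spine_weight k (Suc m) * (k + Suc m) ^ g" for g
    by (simp add: forest_weight.simps(2) forest_weight_empty Suc_diff_le)
  have IH: "forest_weight (Suc h) (k + i) (Suc (m - i))
      = forest_weight (Suc (Suc h)) (k + i) (m - i)
        + (k + Suc m) * forest_weight h (k + i) (Suc (m - i))"
    if "i \<le> m" for i
    using Suc.IH[of "k + i" "m - i"] that by simp
  have pointwise: "(\<Sum>i\<le>m. spine_weight k i * forest_weight (Suc h) (k + i) (Suc (m - i)))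
      = (\<Sum>i\<le>m. spine_weight k i * forest_weight (Suc (Suc h)) (k + i) (m - i)
          + (k + Suc m) * (spine_weight k i * forest_weight h (k + i) (Suc (m - i))))"
  proof (rule sum.cong)
    fix i assume "i \<in> {..m}"
    then show "spine_weight k i * forest_weight (Suc h) (k + i) (Suc (m - i))
      = spine_weight k i * forest_weight (Suc (Suc h)) (k + i) (m - i)
          + (k + Suc m) * (spine_weight k i * forest_weight h (k + i) (Suc (m - i)))"
      using IH[of i] by (simp add: algebra_simps)
  qed simp
  have "forest_weight (Suc (Suc h)) k (Suc m)
      = (\<Sum>i\<le>m. spine_weight k i * forest_weight (Suc (Suc h)) (k + i) (m - i))
        + (k + Suc m) * (\<Sum>i\<le>m. spine_weight k i * forest_weight h (k + i) (Suc (m - i)))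
        + spine_weight k (Suc m) * (k + Suc m) ^ Suc h"
    by (simp only: split_last pointwise sum.distrib sum_distrib_left)
  also have "\<dots> = forest_weight (Suc (Suc (Suc h))) k m
                    + (k + Suc m) * forest_weight (Suc h) k (Suc m)"
    by (simp only: split_last forest_weight.simps(2)[of "Suc (Suc h)"]) (simp add: algebra_simps)
  finally show ?case .
qed

lemma r_eq_forest_weight: "r (m + d) m = forest_weight (Suc d) 1 m"
proof (induction m arbitrary: d)
  case 0
  then show ?case by (simp add: r_0 forest_weight_empty)
next
  case (Suc m)
  note diagonal_IH = Suc.IH
  show ?case
  proof (induction d)
    case 0
    have "r (Suc m) (Suc m) = r (m + 1) m + (Suc m + 1) * r m (Suc m)"
      using r_recurrence[of "Suc m" "Suc m"] by simp
    also have "\<dots> = forest_weight 1 1 (Suc m)"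
      using diagonal_IH[of 1] forest_weight_recurrence[of 0 1 m] r_above_diagonal[of m "Suc m"]
      by simp
    finally show ?case by simp
  next
    case (Suc d)
    have "r (Suc m + Suc d) (Suc m)
        = r (m + Suc (Suc d)) m + (Suc m + 1) * r (Suc m + d) (Suc m)"
      using r_recurrence[of "Suc m + Suc d" "Suc m"] by simp
    also have "\<dots> = forest_weight (Suc (Suc d)) 1 (Suc m)"
      using diagonal_IH[of "Suc (Suc d)"] Suc.IH forest_weight_recurrence[of "Suc d" 1 m] by simp
    finally show ?case .
  qed
qed

section \<open>Pointer maps of a spine\<close>

lemma precedes_iff_list_precedes: "precedes T v u \<longleftrightarrow> list_precedes (postord T) v u"
  by (simp add: precedes_def list_precedes_iff_nth)

lemma precedes_Node:
  "precedes (Node t1 t2) (False # v) (False # u) \<longleftrightarrow> precedes t1 v u"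
  "precedes (Node t1 t2) (True # v) (True # u) \<longleftrightarrow> precedes t2 v u"
  "precedes (Node t1 t2) (False # v) (True # u) \<longleftrightarrow> v \<in> set (postord t1) \<and> u \<in> set (postord t2)"
  "\<not> precedes (Node t1 t2) (True # v) (False # u)"
  "\<not> precedes (Node t1 t2) [] u"
  by (auto simp: precedes_iff_list_precedes list_precedes_append list_precedes_map_Cons)

lemma leaves_not_Nil: "leaves T \<noteq> []"
  by (induction T) auto

lemma set_leaves_subset_postord: "set (leaves T) \<subseteq> set (postord T)"
  by (induction T) auto

lemma set_internals_subset_postord: "set (internals T) \<subseteq> set (postord T)"
  by (induction T) auto

lemma leaves_internals_disjoint: "set (leaves T) \<inter> set (internals T) = {}"
  by (induction T) auto

lemma distinct_internals: "distinct (internals T)"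
  by (induction T) (auto simp: distinct_map)

lemma length_internals: "length (internals T) = bsize T"
  by (induction T) auto

lemma leftmost_leaf_Leaf: "leftmost_leaf Leaf = []"
  by (simp add: leftmost_leaf_def)

lemma leftmost_leaf_Node: "leftmost_leaf (Node t1 t2) = False # leftmost_leaf t1"
  using leaves_not_Nil[of t1] by (cases "leaves t1") (auto simp: leftmost_leaf_def)

lemma leftmost_leaf_in_leaves: "leftmost_leaf T \<in> set (leaves T)"
  using leaves_not_Nil[of T] by (simp add: leftmost_leaf_def)

lemma not_precedes_leftmost_leaf: "\<not> precedes T v (leftmost_leaf T)"
proof (induction T arbitrary: v)
  case Leaf
  then show ?case by (simp add: precedes_def)
next
  case (Node t1 t2)
  then show ?case
    by (metis (full_types) leftmost_leaf_Node precedes_Node(1,4,5) list.exhaust)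
qed

lemma leftmost_leaf_precedes:
  "l \<in> set (leaves T) \<Longrightarrow> l \<noteq> leftmost_leaf T \<Longrightarrow> precedes T (leftmost_leaf T) l"
proof (induction T arbitrary: l)
  case (Node t1 t2)
  from Node.prems(1) consider l' where "l = False # l'" "l' \<in> set (leaves t1)"
    | l' where "l = True # l'" "l' \<in> set (leaves t2)"
    by auto
  then show ?case
  proof cases
    case 1
    then show ?thesis
      using Node.IH(1)[of l'] Node.prems(2) by (simp add: leftmost_leaf_Node precedes_Node)
  next
    case 2
    have "leftmost_leaf t1 \<in> set (postord t1)"
      using leftmost_leaf_in_leaves set_leaves_subset_postord by blast
    then show ?thesis
      using 2 set_leaves_subset_postord[of t2] by (auto simp: leftmost_leaf_Node precedes_Node)
  qed
qed (simp add: leftmost_leaf_Leaf)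

definition internals_before :: "btree \<Rightarrow> bool list \<Rightarrow> nat" where
  "internals_before T l = card {v \<in> set (internals T). precedes T v l}"

lemma internals_before_Node_left:
  "internals_before (Node t1 t2) (False # l) = internals_before t1 l"
proof -
  have "{v \<in> set (internals (Node t1 t2)). precedes (Node t1 t2) v (False # l)}
      = Cons False ` {v \<in> set (internals t1). precedes t1 v l}"
    by (auto simp: precedes_Node)
  then show ?thesis
    by (simp add: internals_before_def card_image del: internals.simps)
qed

lemma internals_before_Node_right:
  assumes "l \<in> set (postord t2)"
  shows "internals_before (Node t1 t2) (True # l) = bsize t1 + internals_before t2 l"
proof -
  have "{v \<in> set (internals (Node t1 t2)). precedes (Node t1 t2) v (True # l)}
      = Cons False ` set (internals t1) \<union> Cons True ` {v \<in> set (internals t2). precedes t2 v l}"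
    using assms set_internals_subset_postord[of t1] by (auto simp: precedes_Node)
  moreover have "card (Cons False ` set (internals t1)
                       \<union> Cons True ` {v \<in> set (internals t2). precedes t2 v l})
      = bsize t1 + internals_before t2 l"
    by (subst card_Un_disjoint)
       (auto simp: card_image distinct_card distinct_internals length_internals internals_before_def)
  ultimately show ?thesis
    by (simp only: internals_before_def)
qed

lemma tree_weight_eq_prod_internals_before:
  "tree_weight k T = (\<Prod>l\<in>set (leaves T). k + internals_before T l)"
proof (induction T arbitrary: k)
  case Leaf
  then show ?case by (simp add: internals_before_def)
next
  case (Node t1 t2)
  let ?factor = "\<lambda>l. k + internals_before (Node t1 t2) l"
  have "(\<Prod>l\<in>set (leaves (Node t1 t2)). ?factor l)
      = (\<Prod>l\<in>Cons False ` set (leaves t1). ?factor l) * (\<Prod>l\<in>Cons True ` set (leaves t2). ?factor l)"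
    unfolding leaves.simps set_append set_map by (rule prod.union_disjoint) auto
  also have "(\<Prod>l\<in>Cons False ` set (leaves t1). ?factor l)
      = (\<Prod>l\<in>set (leaves t1). k + internals_before t1 l)"
    by (simp add: prod.reindex internals_before_Node_left)
  also have "(\<Prod>l\<in>Cons True ` set (leaves t2). ?factor l)
      = (\<Prod>l\<in>set (leaves t2). (k + bsize t1) + internals_before t2 l)"
    using set_leaves_subset_postord[of t2]
    by (auto simp: prod.reindex internals_before_Node_right intro!: prod.cong)
  finally show ?case
    using Node.IH by simp
qed

definition pointer_targets :: "btree \<Rightarrow> bool list \<Rightarrow> bool list set" where
  "pointer_targets T l = {v \<in> set (internals T) \<union> {leftmost_leaf T}. precedes T v l}"

definition pointer_maps :: "btree \<Rightarrow> (bool list \<Rightarrow> bool list option) set" where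
  "pointer_maps T = {f. dom f = set (leaves T) - {leftmost_leaf T}
                       \<and> (\<forall>l\<in>dom f. the (f l) \<in> pointer_targets T l)}"

lemma relaxed_trees_eq_Sigma: "relaxed_trees n = Sigma (spines n) pointer_maps"
proof -
  have "relaxed_trees n = {(T, f). T \<in> spines n \<and> f \<in> pointer_maps T}"
    by (simp add: relaxed_trees_def spines_def pointer_maps_def pointer_targets_def)
  then show ?thesis
    by auto
qed

lemma card_pointer_targets:
  assumes "l \<in> set (leaves T)" "l \<noteq> leftmost_leaf T"
  shows "card (pointer_targets T l) = 1 + internals_before T l"
proof -
  have "pointer_targets T l = insert (leftmost_leaf T) {v \<in> set (internals T). precedes T v l}"
    using leftmost_leaf_precedes[OF assms] by (auto simp: pointer_targets_def)
  moreover have "leftmost_leaf T \<notin> set (internals T)"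
    using leftmost_leaf_in_leaves leaves_internals_disjoint by blast
  ultimately show ?thesis
    by (simp add: internals_before_def)
qed

lemma finite_pointer_maps: "finite (pointer_maps T)"
  unfolding pointer_maps_def by (rule finite_maps_with_dom) (auto simp: pointer_targets_def)

lemma card_pointer_maps: "card (pointer_maps T) = tree_weight 1 T"
proof -
  let ?lm = "leftmost_leaf T"
  have "card (pointer_maps T) = (\<Prod>l\<in>set (leaves T) - {?lm}. card (pointer_targets T l))"
    unfolding pointer_maps_def by (rule card_maps_with_dom) simp
  also have "\<dots> = (\<Prod>l\<in>set (leaves T) - {?lm}. 1 + internals_before T l)"
    by (rule prod.cong) (auto simp: card_pointer_targets)
  also have "\<dots> = (1 + internals_before T ?lm)
                    * (\<Prod>l\<in>set (leaves T) - {?lm}. 1 + internals_before T l)"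
    using not_precedes_leftmost_leaf[of T] by (simp add: internals_before_def)
  also have "\<dots> = (\<Prod>l\<in>set (leaves T). 1 + internals_before T l)"
    by (rule prod.remove[symmetric]) (simp_all add: leftmost_leaf_in_leaves)
  finally show ?thesis
    by (simp add: tree_weight_eq_prod_internals_before)
qed

lemma card_relaxed_trees: "card (relaxed_trees n) = spine_weight 1 n"
  unfolding relaxed_trees_eq_Sigma spine_weight_def
  by (simp add: finite_spines finite_pointer_maps card_pointer_maps)

lemma r_diagonal: "r n n = spine_weight 1 n"
  using r_eq_forest_weight[of n 0] forest_weight_1[of 1 n] by simp

theorem proposition2p6:
  shows "(\<forall>n m. 1 \<le> n \<longrightarrow> 1 \<le> m \<longrightarrow> m \<le> n \<longrightarrow> r n m = r n (m - 1) + (m + 1) * r (n - 1) m)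
       \<and> (\<forall>n m. n < m \<longrightarrow> r n m = 0)
       \<and> (\<forall>n. r n 0 = 1)
       \<and> (\<forall>n. card (relaxed_trees n) = r n n)"
  using r_recurrence r_above_diagonal r_0 card_relaxed_trees r_diagonal by simp

end
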